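(* Let $1\le k\le d$, $\epsilon>0$, let $P\subset\mathbb{R}^d$ be a finite point set, and let $c(P)$ be the output of the Local Search algorithm (defined in the context) run on $P$ with parameters $k$ and $\epsilon$. Then for every $(k-1)$-dimensional linear subspace $\mathcal{H}$ of $\mathbb{R}^d$, $$h(c(P),\mathcal{H})\ge\frac{h(P,\mathcal{H})}{2k(1+\epsilon)}.$$
   Context: For a finite set $S\subset\mathbb{R}^d$ with $|S|=j$, $\mathrm{VOL}(S)$ denotes the $j$-dimensional volume of the parallelepiped spanned by the vectors of $S$. For a set $\mathcal{C}$ and points $p,q$, $\mathcal{C}+q-p$ denotes $(\mathcal{C}\setminus\{p\})\cup\{q\}$. The Local Search algorithm on input $P$, $k$, $\epsilon$: initialize $\mathcal{C}=\emptyset$; for $i=1,\dots,k$ add to $\mathcal{C}$ a point $\arg\max_{p\in P\setminus\mathcal{C}}\mathrm{VOL}(\mathcal{C}\cup\{p\})$; then repeat: if there are $q\in P\setminus\mathcal{C}$ and $p\in\mathcal{C}$ with $\mathrm{VOL}(\mathcal{C}+q-p)\ge(1+\epsilon)\mathrm{VOL}(\mathcal{C})$, replace $p$ by $q$; until no such pair exists; output $\mathcal{C}$. For a point set $Q$ and a subspace $\mathcal{H}$, $h(Q,\mathcal{H})=\max_{p\in Q}\mathrm{dist}(p,\mathcal{H})$, where $\mathrm{dist}(p,\mathcal{H})$ is the Euclidean distance from $p$ to $\mathcal{H}$ (the $k$-directional height). *)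

theory Defs
  imports "HOL-Analysis.Analysis"
begin

text \<open>j-dimensional volume of the parallelepiped spanned by the vectors of a finite set S:
  square root of the Gram determinant, written out via the Leibniz formula over
  permutations of S.\<close>
definition VOL :: "'a::euclidean_space set \<Rightarrow> real" where
  "VOL S = sqrt (\<Sum>\<pi> \<in> {\<pi>. \<pi> permutes S}. of_int (sign \<pi>) * (\<Prod>x\<in>S. x \<bullet> \<pi> x))"

text \<open>Greedy initialisation phase: greedy_run P i C means C is a possible content after i
  greedy additions (ties in the argmax may be broken arbitrarily).\<close>
inductive greedy_run :: "'a::euclidean_space set \<Rightarrow> nat \<Rightarrow> 'a set \<Rightarrow> bool" for P where
  start: "greedy_run P 0 {}"
| step: "greedy_run P i C \<Longrightarrow> p \<in> P - C \<Longrightarrow>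
          (\<forall>p'\<in>P - C. VOL (insert p' C) \<le> VOL (insert p C)) \<Longrightarrow>
          greedy_run P (Suc i) (insert p C)"

definition swap_step :: "'a::euclidean_space set \<Rightarrow> real \<Rightarrow> 'a set \<Rightarrow> 'a set \<Rightarrow> bool" where
  "swap_step P \<epsilon> C C' \<longleftrightarrow>
     (\<exists>p\<in>C. \<exists>q\<in>P - C. C' = insert q (C - {p}) \<and> VOL C' \<ge> (1 + \<epsilon>) * VOL C)"

definition LS_output :: "'a::euclidean_space set \<Rightarrow> nat \<Rightarrow> real \<Rightarrow> 'a set \<Rightarrow> bool" where
  "LS_output P k \<epsilon> C \<longleftrightarrow>
     (\<exists>C0. greedy_run P k C0 \<and> (swap_step P \<epsilon>)\<^sup>*\<^sup>* C0 C \<and> \<not> (\<exists>C'. swap_step P \<epsilon> C C'))"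

definition height :: "'a::euclidean_space set \<Rightarrow> 'a set \<Rightarrow> real" where
  "height Q H = Max ((\<lambda>p. infdist p H) ` Q)"

end

theory Submission
  imports Defs
begin

(* The only property of VOL that is needed is the base-times-height formula
   VOL (insert p S) = dist(p, span S) * VOL S, obtained from the Gram determinant by
   row and column operations.

   Write p = s + r with s = sum_c alpha_c c in span C and r orthogonal to span C. The height
   of p over the facet span (C - {c}) satisfies height^2 = (alpha_c h_c)^2 + |r|^2, where h_c
   is the height of c over that facet; so local optimality gives |alpha_c| <= 1 + eps and
   |r| <= (1 + eps) h_c for every c in C. As dim H < k = dim (span C), some u <> 0 in span C
   is orthogonal to H; expanding |u|^2 = sum_c beta_c (u . c) with |u . c| <= |u| h(C,H)
   produces a c with h_c <= k h(C,H). Hence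
   dist(p,H) <= sum_c |alpha_c| dist(c,H) + |r| <= 2k(1 + eps) h(C,H). *)

definition det_on :: "'i set \<Rightarrow> ('i \<Rightarrow> 'i \<Rightarrow> real) \<Rightarrow> real" where
  "det_on I A = (\<Sum>\<pi> \<in> {\<pi>. \<pi> permutes I}. of_int (sign \<pi>) * (\<Prod>i\<in>I. A i (\<pi> i)))"

lemma det_on_cong:
  assumes "\<And>i j. i \<in> I \<Longrightarrow> j \<in> I \<Longrightarrow> A i j = B i j"
  shows "det_on I A = det_on I B"
  unfolding det_on_def
proof (rule sum.cong[OF refl])
  fix \<pi> assume "\<pi> \<in> {\<pi>. \<pi> permutes I}"
  then have "\<pi> permutes I" by simp
  then show "of_int (sign \<pi>) * (\<Prod>i\<in>I. A i (\<pi> i)) = of_int (sign \<pi>) * (\<Prod>i\<in>I. B i (\<pi> i))"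
    using assms permutes_in_image[of \<pi> I] by (auto intro!: prod.cong)
qed

lemma det_on_transpose:
  assumes fin: "finite I"
  shows "det_on I (\<lambda>i j. A j i) = det_on I A"
proof -
  have "det_on I (\<lambda>i j. A j i)
      = (\<Sum>\<pi> \<in> {\<pi>. \<pi> permutes I}. of_int (sign (inv \<pi>)) * (\<Prod>i\<in>I. A (inv \<pi> i) i))"
    unfolding det_on_def by (subst sum_permutations_inverse) simp
  also have "\<dots> = det_on I A"
    unfolding det_on_def
  proof (rule sum.cong[OF refl])
    fix \<pi> assume "\<pi> \<in> {\<pi>. \<pi> permutes I}"
    then have p: "\<pi> permutes I" by simp
    have "(\<Prod>i\<in>I. A (inv \<pi> i) i) = (\<Prod>i\<in>\<pi> ` I. A (inv \<pi> i) i)"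
      using permutes_image[OF p] by simp
    also have "\<dots> = (\<Prod>j\<in>I. A j (\<pi> j))"
      using permutes_inj[OF p] permutes_inverses(2)[OF p]
      by (subst prod.reindex) (auto intro: inj_on_subset)
    finally show "of_int (sign (inv \<pi>)) * (\<Prod>i\<in>I. A (inv \<pi> i) i) = of_int (sign \<pi>) * (\<Prod>i\<in>I. A i (\<pi> i))"
      using sign_inverse[OF permutation_permutes[THEN iffD2]] fin p by auto
  qed
  finally show ?thesis .
qed

lemma det_on_identical_rows:
  assumes fin: "finite I" and "a \<in> I" "b \<in> I" "a \<noteq> b" and rows: "A a = A b"
  shows "det_on I A = 0"
proof -
  let ?t = "Transposition.transpose a b"
  let ?f = "\<lambda>\<pi>. of_int (sign \<pi>) * (\<Prod>i\<in>I. A i (\<pi> i))"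
  have t: "?t permutes I" using assms by (simp add: permutes_swap_id)
  have "det_on I A = (\<Sum>\<pi> \<in> {\<pi>. \<pi> permutes I}. ?f (\<pi> \<circ> ?t))"
    unfolding det_on_def by (rule sum_permutations_compose_right[OF t])
  also have "\<dots> = (\<Sum>\<pi> \<in> {\<pi>. \<pi> permutes I}. - ?f \<pi>)"
  proof (rule sum.cong[OF refl])
    fix \<pi> assume "\<pi> \<in> {\<pi>. \<pi> permutes I}"
    then have p: "\<pi> permutes I" by simp
    have sign: "sign (\<pi> \<circ> ?t) = - sign \<pi>"
      using sign_compose[of \<pi> ?t] p t fin \<open>a \<noteq> b\<close> sign_swap_id[of a b]
      by (metis mult.right_neutral mult_minus_right permutation_permutes)
    have rows_t: "A (?t j) = A j" for j
      using rows by (simp add: Transposition.transpose_def)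
    have "(\<Prod>i\<in>I. A i ((\<pi> \<circ> ?t) i)) = (\<Prod>i\<in>?t ` I. A i (\<pi> (?t i)))"
      using permutes_image[OF t] by simp
    also have "\<dots> = (\<Prod>j\<in>I. A (?t j) (\<pi> (?t (?t j))))"
      by (rule prod.reindex[unfolded comp_def]) simp
    also have "\<dots> = (\<Prod>j\<in>I. A j (\<pi> j))"
      by (simp add: rows_t)
    finally show "?f (\<pi> \<circ> ?t) = - ?f \<pi>" using sign by simp
  qed
  also have "\<dots> = - det_on I A" unfolding det_on_def by (simp add: sum_negf)
  finally show ?thesis by simp
qed

lemma det_on_insert_zero_row:
  assumes fin: "finite S" and pS: "p \<notin> S" and zero: "\<And>j. j \<in> S \<Longrightarrow> A p j = 0"
  shows "det_on (insert p S) A = A p p * det_on S A"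
proof -
  let ?f = "\<lambda>\<pi>. of_int (sign \<pi>) * (\<Prod>i\<in>insert p S. A i (\<pi> i))"
  have sub: "{\<pi>. \<pi> permutes S} \<subseteq> {\<pi>. \<pi> permutes insert p S}"
    by (auto intro: permutes_subset)
  have vanish: "?f \<pi> = 0" if p: "\<pi> permutes insert p S" and np: "\<not> \<pi> permutes S" for \<pi>
  proof -
    have "\<pi> p \<noteq> p"
      using permutes_superset[OF p, of S] np by auto
    moreover have "\<pi> p \<in> insert p S" using permutes_in_image[OF p] by simp
    ultimately have "A p (\<pi> p) = 0" using zero by auto
    then show ?thesis by (simp add: prod.insert[OF fin pS])
  qed
  have "det_on (insert p S) A = sum ?f {\<pi>. \<pi> permutes S}"
    unfolding det_on_def
    by (rule sum.mono_neutral_right[OF _ sub]) (use fin vanish in \<open>auto simp: finite_permutations\<close>)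
  also have "\<dots> = (\<Sum>\<pi>\<in>{\<pi>. \<pi> permutes S}. A p p * (of_int (sign \<pi>) * (\<Prod>i\<in>S. A i (\<pi> i))))"
  proof (rule sum.cong[OF refl])
    fix \<pi> assume "\<pi> \<in> {\<pi>. \<pi> permutes S}"
    then have "\<pi> p = p" using pS by (simp add: permutes_not_in)
    then show "?f \<pi> = A p p * (of_int (sign \<pi>) * (\<Prod>i\<in>S. A i (\<pi> i)))"
      by (simp add: prod.insert[OF fin pS])
  qed
  also have "\<dots> = A p p * det_on S A" unfolding det_on_def by (simp add: sum_distrib_left)
  finally show ?thesis .
qed

definition gram_det :: "'i set \<Rightarrow> ('i \<Rightarrow> 'a::real_inner) \<Rightarrow> ('i \<Rightarrow> 'a) \<Rightarrow> real" where
  "gram_det I f g = det_on I (\<lambda>i j. f i \<bullet> g j)"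

lemma gram_det_commute: "finite I \<Longrightarrow> gram_det I f g = gram_det I g f"
  unfolding gram_det_def by (subst det_on_transpose[symmetric]) (simp_all add: inner_commute)

lemma gram_det_replace_row:
  assumes fin: "finite I" and pI: "p \<in> I" and span: "f p - v \<in> span (f ` (I - {p}))"
  shows "gram_det I f g = gram_det I (f(p := v)) g"
proof -
  define w where "w = (\<Sum>\<pi> \<in> {\<pi>. \<pi> permutes I}.
    (of_int (sign \<pi>) * (\<Prod>i\<in>I - {p}. f i \<bullet> g (\<pi> i))) *\<^sub>R g (\<pi> p))"
  \<comment> \<open>Expansion along row p: the determinant is the linear functional x \<mapsto> x \<bullet> w of that row.\<close>
  have expand: "gram_det I h g = h p \<bullet> w" if agree: "\<And>i. i \<in> I - {p} \<Longrightarrow> h i = f i" for h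
  proof -
    have "(\<Prod>i\<in>I. h i \<bullet> g (\<pi> i)) = (h p \<bullet> g (\<pi> p)) * (\<Prod>i\<in>I - {p}. f i \<bullet> g (\<pi> i))" for \<pi>
      using prod.remove[OF fin pI, of "\<lambda>i. h i \<bullet> g (\<pi> i)"] agree by (auto intro!: prod.cong)
    then show ?thesis
      unfolding gram_det_def det_on_def w_def
      by (simp add: inner_sum_right inner_scaleR_right mult_ac)
  qed
  have "y \<bullet> w = 0" if y: "y \<in> f ` (I - {p})" for y
  proof -
    obtain s where s: "s \<in> I" "s \<noteq> p" "y = f s" using y by auto
    have "gram_det I (f(p := f s)) g = 0"
      unfolding gram_det_def by (rule det_on_identical_rows[OF fin pI s(1) s(2)[symmetric]]) auto
    then show ?thesis using expand[of "f(p := f s)"] s by simp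
  qed
  then have "(f p - v) \<bullet> w = 0"
    using orthogonal_to_span[OF span, of w] by (simp add: orthogonal_def inner_commute)
  then show ?thesis using expand[of f] expand[of "f(p := v)"] by (simp add: inner_diff_left)
qed

lemma gram_det_insert_orthogonal:
  assumes fin: "finite S" and pS: "p \<notin> S" and s: "s \<in> span S"
    and r: "\<And>w. w \<in> span S \<Longrightarrow> orthogonal r w" and p: "p = s + r"
  shows "gram_det (insert p S) id id = (r \<bullet> r) * gram_det S id id"
proof -
  let ?I = "insert p S" and ?f = "id(p := r)"
  have fin': "finite ?I" using fin by simp
  have span: "id p - r \<in> span (id ` (?I - {p}))"
    using pS p s by (simp add: insert_Diff_if)
  have "gram_det ?I id id = gram_det ?I ?f id" by (rule gram_det_replace_row[OF fin' _ span]) simp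
  also have "\<dots> = gram_det ?I id ?f" by (rule gram_det_commute[OF fin'])
  also have "\<dots> = gram_det ?I ?f ?f" by (rule gram_det_replace_row[OF fin' _ span]) simp
  also have "\<dots> = (r \<bullet> r) * gram_det S ?f ?f"
    unfolding gram_det_def
    by (subst det_on_insert_zero_row[OF fin pS])
      (use pS r span_base in \<open>auto simp: orthogonal_def\<close>)
  also have "gram_det S ?f ?f = gram_det S id id"
    unfolding gram_det_def by (rule det_on_cong) (use pS in auto)
  finally show ?thesis .
qed

lemma infdist_orthogonal_decomp:
  fixes x :: "'a::real_inner"
  assumes V: "subspace V" and y: "y \<in> V" and z: "\<And>w. w \<in> V \<Longrightarrow> orthogonal z w" and x: "x = y + z"
  shows "infdist x V = norm z"
proof (rule antisym)
  show "infdist x V \<le> norm z" using infdist_le[OF y, of x] x by (simp add: dist_norm)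
  have ne: "V \<noteq> {}" using y by auto
  show "norm z \<le> infdist x V"
    unfolding infdist_notempty[OF ne]
  proof (rule cINF_greatest[OF ne])
    fix v assume "v \<in> V"
    then have "orthogonal z (y - v)" using V y z by (simp add: subspace_diff)
    then have "(norm z)\<^sup>2 \<le> (norm (z + (y - v)))\<^sup>2" by (simp add: norm_add_Pythagorean)
    moreover have "z + (y - v) = x - v" using x by simp
    ultimately show "norm z \<le> dist x v" by (simp add: dist_norm power2_le_iff_abs_le)
  qed
qed

lemma VOL_insert:
  fixes S :: "'a::euclidean_space set"
  assumes "finite S" and "p \<notin> S"
  shows "VOL (insert p S) = infdist p (span S) * VOL S"
proof -
  obtain s r where s: "s \<in> span S" and r: "\<And>w. w \<in> span S \<Longrightarrow> orthogonal r w" and p: "p = s + r"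
    using orthogonal_subspace_decomp_exists[of S p] by metis
  have "gram_det (insert p S) id id = (r \<bullet> r) * gram_det S id id"
    by (rule gram_det_insert_orthogonal[OF assms s r p])
  moreover have "infdist p (span S) = norm r"
    by (rule infdist_orthogonal_decomp[OF subspace_span s r p])
  moreover have "VOL T = sqrt (gram_det T id id)" for T :: "'a set"
    unfolding VOL_def gram_det_def det_on_def by simp
  ultimately show ?thesis by (simp add: real_sqrt_mult norm_eq_sqrt_inner)
qed

lemma VOL_nonneg:
  fixes S :: "'a::euclidean_space set"
  shows "finite S \<Longrightarrow> VOL S \<ge> 0"
proof (induction S rule: finite_induct)
  case empty
  then show ?case by (simp add: VOL_def)
next
  case (insert p S)
  then show ?case by (simp add: VOL_insert infdist_nonneg)
qed

lemma independent_if_VOL_pos: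
  fixes S :: "'a::euclidean_space set"
  assumes "finite S" and "VOL S > 0"
  shows "independent S"
proof
  assume "dependent S"
  then obtain a where a: "a \<in> S" "a \<in> span (S - {a})" by (auto simp: dependent_def)
  then have "VOL S = infdist a (span (S - {a})) * VOL (S - {a})"
    using VOL_insert[of "S - {a}" a] assms(1) by (simp add: insert_absorb)
  with a assms(2) show False by simp
qed

lemma infdist_span_remove_lincomb_sq:
  fixes C :: "'a::euclidean_space set"
  assumes fin: "finite C" and c: "c \<in> C" and r: "\<And>w. w \<in> span C \<Longrightarrow> orthogonal r w"
  shows "(infdist ((\<Sum>x\<in>C. \<alpha> x *\<^sub>R x) + r) (span (C - {c})))\<^sup>2
       = (\<alpha> c * infdist c (span (C - {c})))\<^sup>2 + (norm r)\<^sup>2"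
proof -
  let ?V = "span (C - {c})"
  obtain y z where y: "y \<in> ?V" and z: "\<And>w. w \<in> ?V \<Longrightarrow> orthogonal z w" and cyz: "c = y + z"
    using orthogonal_subspace_decomp_exists[of "C - {c}" c] by metis
  have V_sub: "?V \<subseteq> span C" by (rule span_mono) auto
  have "z = c - y" using cyz by simp
  then have "\<alpha> c *\<^sub>R z \<in> span C"
    using y V_sub c by (auto intro: span_scale span_diff span_base)
  then have zr: "orthogonal (\<alpha> c *\<^sub>R z) r"
    using r orthogonal_commute by blast
  have split: "(\<Sum>x\<in>C. \<alpha> x *\<^sub>R x) + r = ((\<Sum>x\<in>C - {c}. \<alpha> x *\<^sub>R x) + \<alpha> c *\<^sub>R y) + (\<alpha> c *\<^sub>R z + r)"
    using sum.remove[OF fin c, of "\<lambda>x. \<alpha> x *\<^sub>R x"] cyz by (simp add: algebra_simps)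
  have "infdist ((\<Sum>x\<in>C. \<alpha> x *\<^sub>R x) + r) ?V = norm (\<alpha> c *\<^sub>R z + r)"
  proof (rule infdist_orthogonal_decomp[OF subspace_span _ _ split])
    show "(\<Sum>x\<in>C - {c}. \<alpha> x *\<^sub>R x) + \<alpha> c *\<^sub>R y \<in> ?V"
      using y by (intro span_add span_sum span_scale) (auto intro: span_base)
    show "orthogonal (\<alpha> c *\<^sub>R z + r) w" if "w \<in> ?V" for w
      using z[OF that] r[of w] that V_sub by (auto simp: orthogonal_def inner_add_left)
  qed
  moreover have "infdist c ?V = norm z"
    by (rule infdist_orthogonal_decomp[OF subspace_span y z cyz])
  ultimately show ?thesis
    using norm_add_Pythagorean[OF zr] by (simp add: power_mult_distrib)
qed

lemma coeff_bounds_if_swap_bounded: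
  fixes C :: "'a::euclidean_space set"
  assumes fin: "finite C" and c: "c \<in> C" and "p \<notin> C" and vol: "VOL C > 0"
    and r: "\<And>w. w \<in> span C \<Longrightarrow> orthogonal r w" and p: "p = (\<Sum>x\<in>C. \<alpha> x *\<^sub>R x) + r"
    and swap: "VOL (insert p (C - {c})) \<le> t * VOL C"
  shows "\<bar>\<alpha> c\<bar> \<le> t" and "norm r \<le> t * infdist c (span (C - {c}))"
proof -
  let ?V = "span (C - {c})"
  define h where "h = infdist c ?V"
  define F where "F = VOL (C - {c})"
  have VC: "VOL C = h * F"
    using VOL_insert[of "C - {c}" c] fin c by (simp add: h_def F_def insert_absorb)
  have "h \<ge> 0" unfolding h_def by (rule infdist_nonneg)
  moreover have "F \<ge> 0" unfolding F_def using fin by (simp add: VOL_nonneg)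
  ultimately have h: "h > 0" and F: "F > 0"
    using vol VC by (auto simp: zero_less_mult_iff)
  have "infdist p ?V * F \<le> (t * h) * F"
    using VOL_insert[of "C - {c}" p] fin \<open>p \<notin> C\<close> swap VC by (simp add: F_def mult.assoc)
  then have dist: "infdist p ?V \<le> t * h" using F by (simp add: mult_le_cancel_right_pos)
  then have th: "t * h \<ge> 0" using infdist_nonneg order_trans by blast
  have "(infdist p ?V)\<^sup>2 \<le> (t * h)\<^sup>2"
    using dist by (intro power_mono infdist_nonneg)
  moreover have "(infdist p ?V)\<^sup>2 = (\<bar>\<alpha> c\<bar> * h)\<^sup>2 + (norm r)\<^sup>2"
    using infdist_span_remove_lincomb_sq[OF fin c r, of \<alpha>] unfolding p h_def by (simp add: power_mult_distrib)
  ultimately have sq: "(\<bar>\<alpha> c\<bar> * h)\<^sup>2 + (norm r)\<^sup>2 \<le> (t * h)\<^sup>2" by simp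
  have "(\<bar>\<alpha> c\<bar> * h)\<^sup>2 \<le> (t * h)\<^sup>2" and "(norm r)\<^sup>2 \<le> (t * h)\<^sup>2"
    using sq zero_le_power2[of "norm r"] zero_le_power2[of "\<bar>\<alpha> c\<bar> * h"] by linarith+
  then have "\<bar>\<alpha> c\<bar> * h \<le> t * h" and "norm r \<le> t * h"
    using th by (auto intro: power2_le_imp_le)
  then show "\<bar>\<alpha> c\<bar> \<le> t" and "norm r \<le> t * h" using h by simp_all
qed

lemma abs_coeff_mul_infdist_le_norm:
  fixes C :: "'a::euclidean_space set"
  assumes "finite C" and "c \<in> C"
  shows "\<bar>\<beta> c\<bar> * infdist c (span (C - {c})) \<le> norm (\<Sum>x\<in>C. \<beta> x *\<^sub>R x)"
proof -
  let ?u = "\<Sum>x\<in>C. \<beta> x *\<^sub>R x"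
  have "(\<bar>\<beta> c\<bar> * infdist c (span (C - {c})))\<^sup>2 = (infdist ?u (span (C - {c})))\<^sup>2"
    using infdist_span_remove_lincomb_sq[OF assms, of 0 \<beta>] by (simp add: power_mult_distrib orthogonal_def)
  also have "infdist ?u (span (C - {c})) \<le> norm ?u"
    using infdist_le[OF span_zero, of ?u "C - {c}"] by simp
  then have "(infdist ?u (span (C - {c})))\<^sup>2 \<le> (norm ?u)\<^sup>2"
    by (intro power_mono) (simp_all add: infdist_nonneg)
  finally show ?thesis by (simp add: power2_le_iff_abs_le)
qed

lemma exists_nonzero_orthogonal_if_dim_less:
  fixes V H :: "'a::euclidean_space set"
  assumes V: "subspace V" and H: "subspace H" and dim: "dim H < dim V"
  obtains u where "u \<in> V" "u \<noteq> 0" "\<And>h. h \<in> H \<Longrightarrow> orthogonal h u"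
proof -
  define U where "U = {y. \<forall>x\<in>H. orthogonal x y}"
  have U: "subspace U" unfolding U_def by (rule subspace_orthogonal_to_vectors)
  have "dim U + dim H = DIM('a)"
    using dim_subspace_orthogonal_to_vectors[OF H subspace_UNIV] unfolding U_def by simp
  moreover have "dim {x + y |x y. x \<in> V \<and> y \<in> U} + dim (V \<inter> U) = dim V + dim U"
    by (rule dim_sums_Int[OF V U])
  moreover have "dim {x + y |x y. x \<in> V \<and> y \<in> U} \<le> DIM('a)" by (rule dim_subset_UNIV)
  ultimately have "dim (V \<inter> U) \<noteq> 0" using dim by linarith
  then obtain u where "u \<in> V" "u \<in> U" "u \<noteq> 0" by (auto simp: dim_eq_0)
  then show thesis using that unfolding U_def by blast
qed

lemma abs_inner_le_norm_mul_infdist: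
  fixes H :: "'a::euclidean_space set"
  assumes H: "subspace H" and u: "\<And>h. h \<in> H \<Longrightarrow> orthogonal h u"
  shows "\<bar>u \<bullet> x\<bar> \<le> norm u * infdist x H"
proof -
  have span_H: "span H = H" using H by (simp add: span_eq_iff)
  obtain a b where a: "a \<in> H" and b: "\<And>w. w \<in> H \<Longrightarrow> orthogonal b w" and x: "x = a + b"
    using orthogonal_subspace_decomp_exists[of H x] unfolding span_H by metis
  have "u \<bullet> a = 0" using u[OF a] by (simp add: orthogonal_def inner_commute)
  then have "u \<bullet> x = u \<bullet> b" by (simp add: x inner_add_right)
  moreover have "infdist x H = norm b" by (rule infdist_orthogonal_decomp[OF H a b x])
  ultimately show ?thesis by (simp add: Cauchy_Schwarz_ineq2)
qed

lemma infdist_le_height: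
  "finite Q \<Longrightarrow> p \<in> Q \<Longrightarrow> infdist p H \<le> height Q H"
  unfolding height_def by (intro Max_ge) auto

lemma height_le:
  assumes "finite Q" "Q \<noteq> {}" "\<And>p. p \<in> Q \<Longrightarrow> infdist p H \<le> b"
  shows "height Q H \<le> b"
  unfolding height_def using assms by (intro Max.boundedI) auto

lemma height_nonneg:
  assumes "finite Q" "Q \<noteq> {}"
  shows "height Q H \<ge> 0"
proof -
  obtain p where "p \<in> Q" using assms(2) by blast
  then show ?thesis using infdist_le_height[OF assms(1), of p H] infdist_nonneg[of p H] by linarith
qed

lemma exists_facet_height_le:
  fixes C H :: "'a::euclidean_space set"
  assumes fin: "finite C" and H: "subspace H"
    and u: "u \<in> span C" "u \<noteq> 0" "\<And>h. h \<in> H \<Longrightarrow> orthogonal h u"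
  shows "\<exists>c\<in>C. infdist c (span (C - {c})) \<le> real (card C) * height C H"
proof -
  let ?h = "height C H"
  have "C \<noteq> {}" using u by auto
  obtain \<beta> where \<beta>: "u = (\<Sum>x\<in>C. \<beta> x *\<^sub>R x)"
    using u(1) span_finite[OF fin] by auto
  obtain c where c: "c \<in> C" and c_max: "\<And>x. x \<in> C \<Longrightarrow> \<bar>\<beta> x\<bar> \<le> \<bar>\<beta> c\<bar>"
  proof -
    have "Max ((\<lambda>x. \<bar>\<beta> x\<bar>) ` C) \<in> (\<lambda>x. \<bar>\<beta> x\<bar>) ` C"
      using fin \<open>C \<noteq> {}\<close> by (intro Max_in) auto
    then obtain c where "c \<in> C" "\<bar>\<beta> c\<bar> = Max ((\<lambda>x. \<bar>\<beta> x\<bar>) ` C)" by auto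
    then show thesis using that fin by simp
  qed
  have "(norm u)\<^sup>2 = u \<bullet> (\<Sum>x\<in>C. \<beta> x *\<^sub>R x)"
    by (simp add: power2_norm_eq_inner flip: \<beta>)
  also have "\<dots> = (\<Sum>x\<in>C. \<beta> x * (u \<bullet> x))"
    by (simp add: inner_sum_right)
  also have "\<dots> \<le> (\<Sum>x\<in>C. \<bar>\<beta> c\<bar> * (norm u * ?h))"
  proof (rule sum_mono)
    fix x assume x: "x \<in> C"
    have "\<bar>u \<bullet> x\<bar> \<le> norm u * infdist x H"
      by (rule abs_inner_le_norm_mul_infdist[OF H u(3)])
    also have "\<dots> \<le> norm u * ?h"
      by (rule mult_left_mono[OF infdist_le_height[OF fin x] norm_ge_zero])
    finally have "\<bar>\<beta> x\<bar> * \<bar>u \<bullet> x\<bar> \<le> \<bar>\<beta> c\<bar> * (norm u * ?h)"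
      using c_max[OF x] by (intro mult_mono) auto
    then show "\<beta> x * (u \<bullet> x) \<le> \<bar>\<beta> c\<bar> * (norm u * ?h)"
      by (simp add: abs_mult[symmetric] abs_le_iff)
  qed
  also have "\<dots> = norm u * (\<bar>\<beta> c\<bar> * (real (card C) * ?h))" by (simp add: mult_ac)
  finally have "norm u \<le> \<bar>\<beta> c\<bar> * (real (card C) * ?h)"
    using u(2) by (simp add: power2_eq_square)
  moreover have "\<bar>\<beta> c\<bar> * infdist c (span (C - {c})) \<le> norm u"
    unfolding \<beta> by (rule abs_coeff_mul_infdist_le_norm[OF fin c])
  moreover have "\<beta> c \<noteq> 0" using calculation u(2) by auto
  ultimately have "\<bar>\<beta> c\<bar> * infdist c (span (C - {c})) \<le> \<bar>\<beta> c\<bar> * (real (card C) * ?h)"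
    by linarith
  then show ?thesis using c \<open>\<beta> c \<noteq> 0\<close> by auto
qed

lemma infdist_lincomb_le:
  fixes H :: "'a::euclidean_space set"
  assumes H: "subspace H" and fin: "finite C"
  shows "infdist (\<Sum>x\<in>C. \<alpha> x *\<^sub>R x) H \<le> (\<Sum>x\<in>C. \<bar>\<alpha> x\<bar> * infdist x H)"
proof -
  have span_H: "span H = H" using H by (simp add: span_eq_iff)
  have "\<forall>x. \<exists>a b. a \<in> H \<and> (\<forall>w\<in>H. orthogonal b w) \<and> x = a + b"
    using orthogonal_subspace_decomp_exists[of H] unfolding span_H by metis
  then obtain a b where a: "\<And>x. a x \<in> H" and b: "\<And>x w. w \<in> H \<Longrightarrow> orthogonal (b x) w"
    and ab: "\<And>x. x = a x + b x"
    by metis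
  have b_eq: "b x = x - a x" for x using ab[of x] by (metis add_diff_cancel_left')
  have "infdist (\<Sum>x\<in>C. \<alpha> x *\<^sub>R x) H \<le> dist (\<Sum>x\<in>C. \<alpha> x *\<^sub>R x) (\<Sum>x\<in>C. \<alpha> x *\<^sub>R a x)"
    using a by (intro infdist_le subspace_sum[OF H] subspace_scale[OF H])
  also have "\<dots> = norm (\<Sum>x\<in>C. \<alpha> x *\<^sub>R b x)"
    by (simp add: dist_norm b_eq scaleR_diff_right sum_subtractf)
  also have "\<dots> \<le> (\<Sum>x\<in>C. norm (\<alpha> x *\<^sub>R b x))"
    by (rule norm_sum)
  also have "\<dots> = (\<Sum>x\<in>C. \<bar>\<alpha> x\<bar> * infdist x H)"
    using infdist_orthogonal_decomp[OF H a b ab] by simp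
  finally show ?thesis .
qed

lemma infdist_le_if_swaps_bounded:
  fixes C H :: "'a::euclidean_space set"
  assumes fin: "finite C" and vol: "VOL C > 0" and H: "subspace H" and dim: "dim H < card C"
    and "p \<notin> C" and swaps: "\<And>c. c \<in> C \<Longrightarrow> VOL (insert p (C - {c})) \<le> t * VOL C"
  shows "infdist p H \<le> 2 * real (card C) * t * height C H"
proof -
  let ?k = "real (card C)" and ?h = "height C H"
  obtain s r where s: "s \<in> span C" and r: "\<And>w. w \<in> span C \<Longrightarrow> orthogonal r w" and p: "p = s + r"
    using orthogonal_subspace_decomp_exists[of C p] by metis
  obtain \<alpha> where \<alpha>: "s = (\<Sum>x\<in>C. \<alpha> x *\<^sub>R x)"
    using s span_finite[OF fin] by auto
  have bounds: "\<bar>\<alpha> c\<bar> \<le> t" "norm r \<le> t * infdist c (span (C - {c}))" if "c \<in> C" for c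
    using coeff_bounds_if_swap_bounded[OF fin that \<open>p \<notin> C\<close> vol r p[unfolded \<alpha>] swaps[OF that]] by simp_all
  have "dim (span C) = card C"
    using independent_if_VOL_pos[OF fin vol] by (simp add: dim_eq_card_independent)
  then obtain u where u: "u \<in> span C" "u \<noteq> 0" "\<And>h. h \<in> H \<Longrightarrow> orthogonal h u"
    using exists_nonzero_orthogonal_if_dim_less[OF subspace_span H, of C] dim by auto
  then obtain c where c: "c \<in> C" and facet: "infdist c (span (C - {c})) \<le> ?k * ?h"
    using exists_facet_height_le[OF fin H u] by blast
  have t: "t \<ge> 0" using bounds(1)[OF c] by linarith
  have "infdist p H \<le> infdist s H + norm r"
    using infdist_triangle[of p H s] p by (simp add: dist_norm)
  also have "infdist s H \<le> (\<Sum>x\<in>C. \<bar>\<alpha> x\<bar> * infdist x H)"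
    unfolding \<alpha> by (rule infdist_lincomb_le[OF H fin])
  also have "\<dots> \<le> (\<Sum>x\<in>C. t * ?h)"
  proof (rule sum_mono)
    fix x assume x: "x \<in> C"
    show "\<bar>\<alpha> x\<bar> * infdist x H \<le> t * ?h"
      by (rule mult_mono[OF bounds(1)[OF x] infdist_le_height[OF fin x] t infdist_nonneg])
  qed
  also have "norm r \<le> t * (?k * ?h)"
    using order_trans[OF bounds(2)[OF c] mult_left_mono[OF facet t]] .
  finally show ?thesis by (simp add: algebra_simps)
qed

lemma greedy_run_subset_card:
  "greedy_run P i C \<Longrightarrow> C \<subseteq> P \<and> finite C \<and> card C = i"
  by (induction rule: greedy_run.induct) auto

lemma swap_steps_subset_card:
  assumes "(swap_step P \<epsilon>)\<^sup>*\<^sup>* C0 C" and "C0 \<subseteq> P" and "finite C0"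
  shows "C \<subseteq> P \<and> finite C \<and> card C = card C0"
  using assms
proof (induction rule: rtranclp_induct)
  case base
  then show ?case by simp
next
  case (step C C')
  then have C: "C \<subseteq> P" "finite C" "card C = card C0" by simp_all
  obtain p q where p: "p \<in> C" and q: "q \<in> P - C" and C': "C' = insert q (C - {p})"
    using step(2) unfolding swap_step_def by blast
  have "card C > 0" using C(2) p card_gt_0_iff by auto
  then have "card C' = card C"
    using C(2) p q by (simp add: C' card_Diff_singleton)
  then show ?case using C p q C' by auto
qed

lemma LS_output_subset_card:
  assumes "LS_output P k \<epsilon> C"
  shows "C \<subseteq> P \<and> finite C \<and> card C = k"
proof -
  obtain C0 where greedy: "greedy_run P k C0" and swaps: "(swap_step P \<epsilon>)\<^sup>*\<^sup>* C0 C"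
    using assms unfolding LS_output_def by blast
  from greedy_run_subset_card[OF greedy] have "C0 \<subseteq> P" "finite C0" "card C0 = k" by auto
  with swap_steps_subset_card[OF swaps] show ?thesis by auto
qed

lemma LS_output_no_improving_swap:
  assumes "LS_output P k \<epsilon> C" and "c \<in> C" and "q \<in> P - C"
  shows "VOL (insert q (C - {c})) < (1 + \<epsilon>) * VOL C"
proof (rule ccontr)
  assume "\<not> ?thesis"
  then have "swap_step P \<epsilon> C (insert q (C - {c}))"
    using assms(2,3) unfolding swap_step_def by auto
  moreover have "\<not> (\<exists>C'. swap_step P \<epsilon> C C')"
    using assms(1) unfolding LS_output_def by auto
  ultimately show False by blast
qed

lemma infdist_le_LS_output_height:
  assumes LS: "LS_output P k \<epsilon> C" and "\<epsilon> > 0" and "1 \<le> k"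
    and H: "subspace H" and "dim H = k - 1" and "p \<in> P"
  shows "infdist p H \<le> 2 * real k * (1 + \<epsilon>) * height C H"
proof -
  obtain fin: "finite C" and card: "card C = k"
    using LS_output_subset_card[OF LS] by blast
  with \<open>1 \<le> k\<close> have "C \<noteq> {}" by auto
  show ?thesis
  proof (cases "p \<in> C")
    case True
    have "1 * 1 \<le> (2 * real k) * (1 + \<epsilon>)"
      using \<open>1 \<le> k\<close> \<open>\<epsilon> > 0\<close> by (intro mult_mono) auto
    then have "1 * height C H \<le> 2 * real k * (1 + \<epsilon>) * height C H"
      by (intro mult_right_mono height_nonneg[OF fin \<open>C \<noteq> {}\<close>]) simp
    then show ?thesis using infdist_le_height[OF fin True, of H] by simp
  next
    case False
    note no_swap = LS_output_no_improving_swap[OF LS _ DiffI[OF \<open>p \<in> P\<close> False]]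
    obtain c where "c \<in> C" using \<open>C \<noteq> {}\<close> by blast
    then have "0 < (1 + \<epsilon>) * VOL C"
      using no_swap[of c] VOL_nonneg[of "insert p (C - {c})"] fin by simp
    then have "VOL C > 0" using \<open>\<epsilon> > 0\<close> by (simp add: zero_less_mult_iff)
    then show ?thesis
      using infdist_le_if_swaps_bounded[OF fin _ H _ False, of "1 + \<epsilon>"] no_swap
        \<open>1 \<le> k\<close> \<open>dim H = k - 1\<close> card by (simp add: less_imp_le)
  qed
qed

theorem lemma4p1:
  fixes P C H :: "(real ^ 'd) set" and k :: nat and \<epsilon> :: real
  assumes "1 \<le> k" and "k \<le> CARD('d)" and "\<epsilon> > 0" and "finite P"
    and "LS_output P k \<epsilon> C"
    and "subspace H" and "dim H = k - 1"
  shows "height C H \<ge> height P H / (2 * real k * (1 + \<epsilon>))"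
proof -
  have "C \<subseteq> P" and "C \<noteq> {}"
    using LS_output_subset_card[OF assms(5)] assms(1) by auto
  then have "height P H \<le> 2 * real k * (1 + \<epsilon>) * height C H"
    using height_le[OF assms(4)] infdist_le_LS_output_height[OF assms(5,3,1,6,7)] by blast
  moreover have "2 * real k * (1 + \<epsilon>) > 0" using assms(1,3) by simp
  ultimately show ?thesis by (simp add: divide_le_eq mult.commute)
qed

end
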